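(* Let $E$ be a finite set and let $\mathcal{W}\subseteq\{+,-,0\}^E$ satisfy (A1), (A2), (A3). Let $N_1,N_2\in\mathcal{P}(\mathcal{W})$ with $\underline{N_1}=\underline{N_2}$ and $N_1\neq N_2$, where $N_1=U+(-U')$ for some $U,U'\in\mathrm{asym}(\mathcal{W})$ with $\underline{U}=\underline{U'}$ and $I(U,-U')\cap\mathcal{W}=I(-U,U')\cap\mathcal{W}=\emptyset$. Let $V=(-N_2)\circ U$. Then the pair $(X,Y)=(U,V)$ does not satisfy all the conditions in the definition of $\mathcal{P}(\mathcal{W})$, i.e. it does not witness that $U+(-V)\in\mathcal{P}(\mathcal{W})$.
   Context: For $X\in\{+,-,0\}^E$: $X^+=\{e:X_e=+\}$, $X^-=\{e:X_e=-\}$, support $\underline{X}=X^+\cup X^-$; $(-X)_e=-X_e$; composition $(X\circ Y)_e=X_e$ if $X_e\neq0$, else $Y_e$; $S(X,Y)=(X^+\cap Y^-)\cup(X^-\cap Y^+)$; $\mathcal{A}\circ\mathcal{B}=\{A\circ B\}$. For $X,Y$ with $\underline{X}=\underline{Y}$, $X\neq Y$, $e\in S(X,Y)$: $I_e(X,Y)=\{V : \underline{V}\subseteq\underline{X}\setminus\{e\}, V_f=X_f\ \forall f\notin S(X,Y)\}$, $I(X,Y)=\bigcup_{e\in S(X,Y)}I_e(X,Y)$. Sum: $(X+Y)_e=0$ if $e\in S(X,Y)$, else $(X\circ Y)_e$. $\mathrm{asym}(\mathcal{W})=\{V\in\mathcal{W}:-V\notin\mathcal{W}\}$; $\mathcal{P}(\mathcal{W})=\{X+(-Y):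 X,Y\in\mathrm{asym}(\mathcal{W}), \underline{X}=\underline{Y}, I(X,-Y)\cap\mathcal{W}=I(-X,Y)\cap\mathcal{W}=\emptyset\}$; a pair $(X,Y)$ witnesses $X+(-Y)\in\mathcal{P}(\mathcal{W})$ if it satisfies all these conditions. Axioms: (A1) $X,Y\in\mathcal{W}\Rightarrow X\circ Y\in\mathcal{W}$ and $X\circ(-Y)\in\mathcal{W}$; (A2) if $X,Y\in\mathcal{W}$ with $\underline{X}=\underline{Y}$ then $I_e(X,Y)\cap\mathcal{W}\neq\emptyset$ for every $e\in S(X,Y)$; (A3) $\mathcal{P}(\mathcal{W})\circ\mathcal{W}\subseteq\mathcal{W}$. *)

theory Defs
  imports Main
begin

text \<open>Sign vectors over a finite ground set E, rendered as the finite type 'e.\<close>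

datatype sign = Pos | Neg | Zero

type_synonym 'e svec = "'e \<Rightarrow> sign"

definition supp :: "'e svec \<Rightarrow> 'e set" where
  "supp X = {e. X e \<noteq> Zero}"

definition sneg :: "'e svec \<Rightarrow> 'e svec" where
  "sneg X = (\<lambda>e. case X e of Pos \<Rightarrow> Neg | Neg \<Rightarrow> Pos | Zero \<Rightarrow> Zero)"

definition comp :: "'e svec \<Rightarrow> 'e svec \<Rightarrow> 'e svec" where
  "comp X Y = (\<lambda>e. if X e \<noteq> Zero then X e else Y e)"

definition sep :: "'e svec \<Rightarrow> 'e svec \<Rightarrow> 'e set" where
  "sep X Y = {e. (X e = Pos \<and> Y e = Neg) \<or> (X e = Neg \<and> Y e = Pos)}"

definition Ie :: "'e svec \<Rightarrow> 'e svec \<Rightarrow> 'e \<Rightarrow> 'e svec set" where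
  "Ie X Y e = {V. supp V \<subseteq> supp X - {e} \<and> (\<forall>f. f \<notin> sep X Y \<longrightarrow> V f = X f)}"

definition Iset :: "'e svec \<Rightarrow> 'e svec \<Rightarrow> 'e svec set" where
  "Iset X Y = (\<Union>e\<in>sep X Y. Ie X Y e)"

definition ssum :: "'e svec \<Rightarrow> 'e svec \<Rightarrow> 'e svec" where
  "ssum X Y = (\<lambda>e. if e \<in> sep X Y then Zero else comp X Y e)"

definition asym :: "'e svec set \<Rightarrow> 'e svec set" where
  "asym W = {V \<in> W. sneg V \<notin> W}"

definition witnesses :: "'e svec set \<Rightarrow> 'e svec \<Rightarrow> 'e svec \<Rightarrow> bool" where
  "witnesses W X Y \<longleftrightarrow> X \<in> asym W \<and> Y \<in> asym W \<and> supp X = supp Y \<and>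
     Iset X (sneg Y) \<inter> W = {} \<and> Iset (sneg X) Y \<inter> W = {}"

definition Pset :: "'e svec set \<Rightarrow> 'e svec set" where
  "Pset W = {ssum X (sneg Y) | X Y. witnesses W X Y}"

definition A1 :: "'e svec set \<Rightarrow> bool" where
  "A1 W \<longleftrightarrow> (\<forall>X\<in>W. \<forall>Y\<in>W. comp X Y \<in> W \<and> comp X (sneg Y) \<in> W)"

definition A2 :: "'e svec set \<Rightarrow> bool" where
  "A2 W \<longleftrightarrow> (\<forall>X\<in>W. \<forall>Y\<in>W. supp X = supp Y \<longrightarrow> (\<forall>e\<in>sep X Y. Ie X Y e \<inter> W \<noteq> {}))"

definition A3 :: "'e svec set \<Rightarrow> bool" where
  "A3 W \<longleftrightarrow> (\<forall>N\<in>Pset W. \<forall>X\<in>W. comp N X \<in> W)"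

end

theory Submission
  imports Defs
begin

text \<open>Pick e with N1 e \<noteq> N2 e. Since N1 agrees with U on its support and supp N2 = supp N1
  \<subseteq> supp U, we get N2 e = -U e. By (A3) M = N2 \<circ> U lies in W and has support supp U, and
  e \<in> S(M, U), so (A2) yields an element of I_e(M, U) \<inter> W. With V = (-N2) \<circ> U we have
  -V = N2 \<circ> (-U), and I_e(M, U) \<subseteq> I_e(U, -V); hence I(U, -V) \<inter> W \<noteq> \<emptyset>, so (U, V) is
  not a witness.\<close>

lemma sneg_sneg [simp]: "sneg (sneg X) = X"
  by (rule ext) (simp add: sneg_def split: sign.split)

lemma sneg_comp: "sneg (comp X Y) = comp (sneg X) (sneg Y)"
  by (rule ext) (simp add: sneg_def comp_def split: sign.split)

lemma sep_comp_left: "sep (comp N U) U = sep N U"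
  by (auto simp: sep_def comp_def)

lemma sep_subset_sep_comp_sneg: "sep N U \<subseteq> sep U (comp N (sneg U))"
  by (auto simp: sep_def comp_def)

lemma supp_comp_eq_right: "supp N \<subseteq> supp U \<Longrightarrow> supp (comp N U) = supp U"
  by (auto simp: supp_def comp_def)

lemma ssum_sneg_nonzero:
  assumes "supp U = supp U'" and "ssum U (sneg U') f \<noteq> Zero"
  shows "ssum U (sneg U') f = U f" and "U f \<noteq> Zero"
proof -
  have "U f = Zero \<longleftrightarrow> U' f = Zero"
    using assms(1) by (auto simp: supp_def set_eq_iff)
  then show "ssum U (sneg U') f = U f" and "U f \<noteq> Zero"
    using assms(2) by (cases "U f"; cases "U' f"; auto simp: ssum_def comp_def sep_def sneg_def)+
qed

lemma supp_ssum_sneg_subset: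
  assumes "supp U = supp U'"
  shows "supp (ssum U (sneg U')) \<subseteq> supp U"
proof
  fix f assume "f \<in> supp (ssum U (sneg U'))"
  then show "f \<in> supp U"
    using ssum_sneg_nonzero(2)[OF assms] by (simp add: supp_def)
qed

lemma Ie_mono:
  assumes "supp X = supp X'" and "sep X Y \<subseteq> sep X' Y'"
    and "\<And>f. f \<notin> sep X' Y' \<Longrightarrow> X f = X' f"
  shows "Ie X Y e \<subseteq> Ie X' Y' e"
  using assms by (auto simp: Ie_def)

lemma Ie_comp_subset:
  assumes "supp N \<subseteq> supp U"
  shows "Ie (comp N U) U e \<subseteq> Ie U (comp N (sneg U)) e"
proof (rule Ie_mono)
  show "supp (comp N U) = supp U"
    using assms by (rule supp_comp_eq_right)
  show "sep (comp N U) U \<subseteq> sep U (comp N (sneg U))"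
    by (simp add: sep_comp_left sep_subset_sep_comp_sneg)
next
  fix f assume f: "f \<notin> sep U (comp N (sneg U))"
  show "comp N U f = U f"
  proof (cases "N f = Zero")
    case True
    then show ?thesis by (simp add: comp_def)
  next
    case False
    moreover from this have "U f \<noteq> Zero"
      using assms by (auto simp: supp_def)
    ultimately show ?thesis
      using f by (cases "N f"; cases "U f"; simp add: comp_def sep_def)
  qed
qed

lemma opposite_sign_in_sep:
  assumes "N f \<noteq> Zero" and "U f \<noteq> Zero" and "N f \<noteq> U f"
  shows "f \<in> sep N U"
  using assms by (cases "N f"; cases "U f"; auto simp: sep_def)

theorem lemma4p1:
  fixes W :: "('e::finite) svec set" and N1 N2 U U' :: "'e svec"
  assumes "A1 W" and "A2 W" and "A3 W"
    and "N1 \<in> Pset W" and "N2 \<in> Pset W"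
    and "supp N1 = supp N2" and "N1 \<noteq> N2"
    and "U \<in> asym W" and "U' \<in> asym W" and "supp U = supp U'"
    and "Iset U (sneg U') \<inter> W = {}" and "Iset (sneg U) U' \<inter> W = {}"
    and "N1 = ssum U (sneg U')"
  shows "\<not> witnesses W U (comp (sneg N2) U)"
proof
  assume wit: "witnesses W U (comp (sneg N2) U)"
  have UW: "U \<in> W" using assms(8) by (simp add: asym_def)
  have suppN2: "supp N2 \<subseteq> supp U"
    using assms(6,10,13) supp_ssum_sneg_subset by blast
  obtain e where "N1 e \<noteq> N2 e" using assms(7) by blast
  moreover from this have "N1 e \<noteq> Zero" and "N2 e \<noteq> Zero"
    using assms(6) by (auto simp: supp_def set_eq_iff)
  ultimately have e: "e \<in> sep N2 U"
    using ssum_sneg_nonzero[OF assms(10)] assms(13) opposite_sign_in_sep[of N2 e U] by metis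
  have "comp N2 U \<in> W" using assms(3,5) UW by (simp add: A3_def)
  then obtain X where "X \<in> Ie (comp N2 U) U e" and "X \<in> W"
    using assms(2) UW e supp_comp_eq_right[OF suppN2] sep_comp_left[of N2 U]
    unfolding A2_def by blast
  then have "X \<in> Ie U (sneg (comp (sneg N2) U)) e"
    using Ie_comp_subset[OF suppN2] by (auto simp: sneg_comp)
  moreover have "e \<in> sep U (sneg (comp (sneg N2) U))"
    using e sep_subset_sep_comp_sneg[of N2 U] by (auto simp: sneg_comp)
  moreover have "Iset U (sneg (comp (sneg N2) U)) \<inter> W = {}"
    using wit by (simp add: witnesses_def)
  ultimately show False
    using \<open>X \<in> W\<close> unfolding Iset_def by blast
qed

end
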